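(* Let $A=(a_1\ a_2\ a_3)$ be a $1\times3$ matrix of pairwise distinct positive integers whose toric ideal $I_A$ is a complete intersection. Let $M=\{b,c\}$ be a minimal Markov basis for $A$ with $b=(b_1,-b_2,0)$ and $c=(c_1,c_2,-c_3)$, where $b_1,b_2,c_3>0$, $c_1,c_2\ge 0$ are integers and $b_1>b_2$. Then the following are equivalent: (1) $M$ is distance reducing; (2) $M$ reduces the distance of the circuit $z=\gamma(0,a_3,-a_2)$, where $\gamma=1/\gcd(a_2,a_3)$; (3) $c_1<c_2+c_3$.
   Context: For $z\in\mathbb Z^n$, $z^+,z^-\in\mathbb N^n$ denote the unique vectors with disjoint supports and $z=z^+-z^-$; $\|\cdot\|$ is the $1$-norm. The toric ideal is $I_A=\langle x^{u^+}-x^{u^-}:u\in\ker(A)\rangle$; it is a complete intersection if it is generated by $\dim\ker(A)$ elements. A Markov basis is a set $B\subseteq\ker(A)$ whose binomials $x^{u^+}-x^{u^-}$ generate $I_A$; minimal means no proper subset is a Markov basis. For nonzero $z\in\ker(A)$, $u\in\ker(A)$ reduces the distance of $z$ if there exist $(p,q)\in\{(z^+,z^-),(z^-,z^+)\}$ and $\varepsilon\in\{\pm1\}$ with $p+\varepsilon u\in\mathbb N^n$ and $\|p+\varepsilon u-q\|<\|z\|$. $B$ reduces the distance of $Z$ if each nonzero $z\in Z$ has its distance reduced by some element of $B$; $B$ is distance reducing if it reduces the distance of $\ker(A)$. *)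

theory Defs
  imports Main "HOL-Library.Poly_Mapping"
begin

(* Integer vectors in Z^n are represented as functions nat => int, only the
   coordinates 0..n-1 being relevant. An m x n integer matrix is a function
   nat => nat => int (row index, column index). *)

definition kerA :: "nat \<Rightarrow> nat \<Rightarrow> (nat \<Rightarrow> nat \<Rightarrow> int) \<Rightarrow> (nat \<Rightarrow> int) set" where
  "kerA m n A = {u. (\<forall>i\<ge>n. u i = 0) \<and> (\<forall>r<m. (\<Sum>j<n. A r j * u j) = 0)}"

definition posp :: "(nat \<Rightarrow> int) \<Rightarrow> nat \<Rightarrow> int" where
  "posp z = (\<lambda>i. max (z i) 0)"

definition negp :: "(nat \<Rightarrow> int) \<Rightarrow> nat \<Rightarrow> int" where
  "negp z = (\<lambda>i. max (- z i) 0)"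

definition norm1 :: "nat \<Rightarrow> (nat \<Rightarrow> int) \<Rightarrow> int" where
  "norm1 n z = (\<Sum>i<n. \<bar>z i\<bar>)"

type_synonym 'k mpoly = "(nat \<Rightarrow>\<^sub>0 nat) \<Rightarrow>\<^sub>0 'k"

definition expo :: "nat \<Rightarrow> (nat \<Rightarrow> int) \<Rightarrow> (nat \<Rightarrow>\<^sub>0 nat)" where
  "expo n v = (\<Sum>i<n. Poly_Mapping.single i (nat (v i)))"

definition xmon :: "nat \<Rightarrow> (nat \<Rightarrow> int) \<Rightarrow> 'k::field mpoly" where
  "xmon n v = Poly_Mapping.single (expo n v) 1"

definition binom :: "nat \<Rightarrow> (nat \<Rightarrow> int) \<Rightarrow> 'k::field mpoly" where
  "binom n u = xmon n (posp u) - xmon n (negp u)"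

definition ideal_gen :: "'a::comm_ring_1 set \<Rightarrow> 'a set" where
  "ideal_gen S = {x. \<exists>F c. finite F \<and> F \<subseteq> S \<and> x = (\<Sum>f\<in>F. c f * f)}"

definition toric_ideal :: "nat \<Rightarrow> nat \<Rightarrow> (nat \<Rightarrow> nat \<Rightarrow> int) \<Rightarrow> 'k::field mpoly set" where
  "toric_ideal m n A = ideal_gen (binom n ` kerA m n A)"

(* I_A is generated by d elements (d = dim ker A) *)
definition complete_intersection ::
  "'k::field itself \<Rightarrow> nat \<Rightarrow> nat \<Rightarrow> (nat \<Rightarrow> nat \<Rightarrow> int) \<Rightarrow> nat \<Rightarrow> bool" where
  "complete_intersection _ m n A d \<longleftrightarrow>
     (\<exists>gs :: 'k mpoly list. length gs = d \<and> ideal_gen (set gs) = toric_ideal m n A)"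

definition markov_basis ::
  "'k::field itself \<Rightarrow> nat \<Rightarrow> nat \<Rightarrow> (nat \<Rightarrow> nat \<Rightarrow> int) \<Rightarrow> (nat \<Rightarrow> int) set \<Rightarrow> bool" where
  "markov_basis _ m n A B \<longleftrightarrow> B \<subseteq> kerA m n A \<and>
     ideal_gen ((binom n :: _ \<Rightarrow> 'k mpoly) ` B) = toric_ideal m n A"

definition minimal_markov_basis ::
  "'k::field itself \<Rightarrow> nat \<Rightarrow> nat \<Rightarrow> (nat \<Rightarrow> nat \<Rightarrow> int) \<Rightarrow> (nat \<Rightarrow> int) set \<Rightarrow> bool" where
  "minimal_markov_basis K m n A B \<longleftrightarrow> markov_basis K m n A B \<and>
     (\<forall>B'. B' \<subset> B \<longrightarrow> \<not> markov_basis K m n A B')"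

definition reduces_dist :: "nat \<Rightarrow> (nat \<Rightarrow> int) \<Rightarrow> (nat \<Rightarrow> int) \<Rightarrow> bool" where
  "reduces_dist n u z \<longleftrightarrow>
     (\<exists>(p, q) \<in> {(posp z, negp z), (negp z, posp z)}. \<exists>\<epsilon> \<in> {1, -1::int}.
        (\<forall>i<n. 0 \<le> p i + \<epsilon> * u i) \<and>
        norm1 n (\<lambda>i. p i + \<epsilon> * u i - q i) < norm1 n z)"

definition reduces_dist_set :: "nat \<Rightarrow> (nat \<Rightarrow> int) set \<Rightarrow> (nat \<Rightarrow> int) set \<Rightarrow> bool" where
  "reduces_dist_set n B Z \<longleftrightarrow> (\<forall>z\<in>Z. z \<noteq> (\<lambda>_. 0) \<longrightarrow> (\<exists>u\<in>B. reduces_dist n u z))"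

definition distance_reducing ::
  "nat \<Rightarrow> nat \<Rightarrow> (nat \<Rightarrow> nat \<Rightarrow> int) \<Rightarrow> (nat \<Rightarrow> int) set \<Rightarrow> bool" where
  "distance_reducing m n A B \<longleftrightarrow> reduces_dist_set n B (kerA m n A)"

definition vec3 :: "int \<Rightarrow> int \<Rightarrow> int \<Rightarrow> nat \<Rightarrow> int" where
  "vec3 x y z = (\<lambda>i. if i = 0 then x else if i = 1 then y else if i = 2 then z else 0)"

end

theory Submission
  imports Defs "HOL-Library.Function_Algebras"
begin

(* Every kernel vector is an integer combination z = \<alpha> b + \<beta> c of the Markov basis. Indeed,
   for u in ker A the indicator of the coset of int_span {b, c} through the exponent of x^{u-},
   read as a weight on monomials, is invariant under the moves b and c; so the pairing of
   coefficients with it kills the ideal generated by their binomials, while on x^{u+} - x^{u-}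
   it vanishes only if u lies in the span.
   Shifting z^+ or z^- by a vector u leaves the 1-norm distance ||z + u|| or ||z - u||. If
   c1 < c2 + c3, subtracting b from z^+ (when \<alpha> >= 1, \<beta> >= 0) or adding c to z^- (when
   \<alpha> <= 0, \<beta> >= 1) reduces the distance, and the remaining sign patterns follow by passing
   to -z. Conversely, the circuit (0, a3/g, -a2/g) has \<beta> >= 1 and \<alpha> <= 0: b never reduces
   its distance because b1 > b2, and c reduces it only if c1 < c2 + c3. *)

definition coeff_pairing :: "('a \<Rightarrow> 'k) \<Rightarrow> ('a \<Rightarrow>\<^sub>0 'k::comm_ring_1) \<Rightarrow> 'k" where
  "coeff_pairing w P = Sum_any (\<lambda>m. Poly_Mapping.lookup P m * w m)"

lemma finite_coeff_pairing_support:
  "finite {m. Poly_Mapping.lookup P m * w m \<noteq> (0::'k::comm_ring_1)}"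
  by (rule finite_subset[of _ "Poly_Mapping.keys P"]) (auto simp: in_keys_iff)

lemma coeff_pairing_add: "coeff_pairing w (P + Q) = coeff_pairing w P + coeff_pairing w Q"
  unfolding coeff_pairing_def lookup_add distrib_right
  by (rule Sum_any.distrib[OF finite_coeff_pairing_support finite_coeff_pairing_support])

lemma coeff_pairing_diff: "coeff_pairing w (P - Q) = coeff_pairing w P - coeff_pairing w Q"
  by (metis add_diff_cancel coeff_pairing_add diff_add_cancel)

lemma coeff_pairing_single: "coeff_pairing w (Poly_Mapping.single e a) = a * w e"
  unfolding coeff_pairing_def lookup_single by (simp add: when_mult)

lemma coeff_pairing_zero: "coeff_pairing w 0 = 0"
  by (simp add: coeff_pairing_def)

lemma coeff_pairing_sum:
  "finite F \<Longrightarrow> coeff_pairing w (\<Sum>f\<in>F. g f) = (\<Sum>f\<in>F. coeff_pairing w (g f))"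
  by (induction F rule: finite_induct) (simp_all add: coeff_pairing_add coeff_pairing_zero)

lemma poly_mapping_monomial_expansion:
  "P = (\<Sum>k\<in>Poly_Mapping.keys P. Poly_Mapping.single k (Poly_Mapping.lookup P k))"
  by (rule poly_mapping_eqI)
    (auto simp: lookup_sum lookup_single when_def in_keys_iff)

lemma coeff_pairing_mult_binomial:
  fixes P :: "'a::comm_monoid_add \<Rightarrow>\<^sub>0 'k::comm_ring_1"
  assumes "\<And>l. w (l + e1) = w (l + e2)"
  shows "coeff_pairing w (P * (Poly_Mapping.single e1 1 - Poly_Mapping.single e2 1)) = 0"
proof -
  have "P * (Poly_Mapping.single e1 1 - Poly_Mapping.single e2 1)
      = (\<Sum>k\<in>Poly_Mapping.keys P. Poly_Mapping.single (k + e1) (Poly_Mapping.lookup P k)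
                                   - Poly_Mapping.single (k + e2) (Poly_Mapping.lookup P k))"
    by (subst poly_mapping_monomial_expansion[of P])
      (simp add: sum_distrib_right right_diff_distrib mult_single sum_subtractf)
  then show ?thesis
    by (simp add: coeff_pairing_sum coeff_pairing_diff coeff_pairing_single assms)
qed

lemma coeff_pairing_ideal_gen_binomials:
  fixes P :: "'a::comm_monoid_add \<Rightarrow>\<^sub>0 'k::comm_ring_1"
  assumes "P \<in> ideal_gen G"
    and "\<And>g. g \<in> G \<Longrightarrow> \<exists>e1 e2. g = Poly_Mapping.single e1 1 - Poly_Mapping.single e2 1
                                 \<and> (\<forall>l. w (l + e1) = w (l + e2))"
  shows "coeff_pairing w P = 0"
proof -
  obtain F c where F: "finite F" "F \<subseteq> G" and P: "P = (\<Sum>f\<in>F. c f * f)"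
    using assms(1) unfolding ideal_gen_def by blast
  have "coeff_pairing w (c f * f) = 0" if "f \<in> F" for f
    using assms(2)[of f] F(2) that coeff_pairing_mult_binomial by blast
  then show ?thesis
    by (simp add: P coeff_pairing_sum F(1))
qed

inductive_set int_span :: "'a::ab_group_add set \<Rightarrow> 'a set" for B where
  zero: "0 \<in> int_span B"
| add: "v \<in> int_span B \<Longrightarrow> d \<in> B \<Longrightarrow> v + d \<in> int_span B"
| diff: "v \<in> int_span B \<Longrightarrow> d \<in> B \<Longrightarrow> v - d \<in> int_span B"

lemma int_span_add_iff: "d \<in> B \<Longrightarrow> v + d \<in> int_span B \<longleftrightarrow> v \<in> int_span B"
  by (metis add_diff_cancel int_span.add int_span.diff)

lemma int_span_pair:
  fixes b c :: "'i \<Rightarrow> 'r::comm_ring_1"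
  assumes "v \<in> int_span {b, c}"
  shows "\<exists>\<alpha> \<beta>. v = (\<lambda>i. \<alpha> * b i + \<beta> * c i)"
  using assms
proof (induction v rule: int_span.induct)
  case zero
  show ?case by (intro exI[of _ 0]) auto
next
  case (add v d)
  then obtain \<alpha> \<beta> where v: "v = (\<lambda>i. \<alpha> * b i + \<beta> * c i)" by blast
  from add.hyps(2) have "v + d = (\<lambda>i. (\<alpha> + 1) * b i + \<beta> * c i) \<or> v + d = (\<lambda>i. \<alpha> * b i + (\<beta> + 1) * c i)"
    by (auto simp: v fun_eq_iff algebra_simps)
  then show ?case by blast
next
  case (diff v d)
  then obtain \<alpha> \<beta> where v: "v = (\<lambda>i. \<alpha> * b i + \<beta> * c i)" by blast
  from diff.hyps(2) have "v - d = (\<lambda>i. (\<alpha> - 1) * b i + \<beta> * c i) \<or> v - d = (\<lambda>i. \<alpha> * b i + (\<beta> - 1) * c i)"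
    by (auto simp: v fun_eq_iff algebra_simps)
  then show ?case by blast
qed

definition exponent_vector :: "(nat \<Rightarrow>\<^sub>0 nat) \<Rightarrow> nat \<Rightarrow> int" where
  "exponent_vector l = (\<lambda>i. int (Poly_Mapping.lookup l i))"

lemma exponent_vector_add: "exponent_vector (l + e) = exponent_vector l + exponent_vector e"
  by (simp add: exponent_vector_def lookup_add fun_eq_iff)

lemma lookup_expo: "Poly_Mapping.lookup (expo n v) i = (if i < n then nat (v i) else 0)"
  unfolding expo_def lookup_sum lookup_single by (auto simp: when_def)

lemma exponent_vector_expo_posp_negp:
  assumes "\<forall>i\<ge>n. v i = 0"
  shows "exponent_vector (expo n (posp v)) = exponent_vector (expo n (negp v)) + v"
  using assms by (auto simp: fun_eq_iff exponent_vector_def lookup_expo posp_def negp_def)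

lemma ideal_gen_superset: "x \<in> S \<Longrightarrow> x \<in> ideal_gen S"
  unfolding ideal_gen_def by (intro CollectI exI[of _ "{x}"] exI[of _ "\<lambda>_. 1"]) auto

lemma kerA_subset_int_span_markov_basis:
  assumes "markov_basis TYPE('k::field) m n A B"
  shows "kerA m n A \<subseteq> int_span B"
proof
  fix u assume u: "u \<in> kerA m n A"
  define m0 where "m0 = expo n (negp u)"
  define w :: "(nat \<Rightarrow>\<^sub>0 nat) \<Rightarrow> 'k" where
    "w l = (if exponent_vector l - exponent_vector m0 \<in> int_span B then 1 else 0)" for l
  have "binom n u \<in> ideal_gen ((binom n :: _ \<Rightarrow> 'k mpoly) ` B)"
    using assms u unfolding markov_basis_def toric_ideal_def
    by (metis image_eqI ideal_gen_superset)
  moreover have "w (l + expo n (posp d)) = w (l + expo n (negp d))" if "d \<in> B" for l d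
  proof -
    have "\<forall>i\<ge>n. d i = 0"
      using assms that unfolding markov_basis_def kerA_def by blast
    then have "exponent_vector (l + expo n (posp d)) - exponent_vector m0
             = (exponent_vector (l + expo n (negp d)) - exponent_vector m0) + d"
      by (simp add: exponent_vector_add exponent_vector_expo_posp_negp diff_add_eq ac_simps)
    then show ?thesis
      by (simp only: w_def int_span_add_iff[OF that])
  qed
  ultimately have "coeff_pairing w (binom n u) = 0"
    by (intro coeff_pairing_ideal_gen_binomials) (auto simp: binom_def xmon_def)
  then have "w (expo n (posp u)) = w m0"
    by (simp add: binom_def xmon_def coeff_pairing_diff coeff_pairing_single m0_def)
  moreover have "exponent_vector (expo n (posp u)) - exponent_vector m0 = u"
    using u by (simp add: m0_def kerA_def exponent_vector_expo_posp_negp)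
  ultimately show "u \<in> int_span B"
    by (simp add: w_def int_span.zero split: if_splits)
qed

lemma markov_basis_pair_lincomb:
  assumes "markov_basis TYPE('k::field) m n A {b, c}" "u \<in> kerA m n A"
  obtains \<alpha> \<beta> where "u = (\<lambda>i. \<alpha> * b i + \<beta> * c i)"
  using assms kerA_subset_int_span_markov_basis int_span_pair by blast

lemma reduces_dist_iff:
  "reduces_dist n u z \<longleftrightarrow>
     (\<exists>\<epsilon>\<in>{1, -1::int}. norm1 n (\<lambda>i. z i + \<epsilon> * u i) < norm1 n z \<and>
        ((\<forall>i<n. 0 \<le> posp z i + \<epsilon> * u i) \<or> (\<forall>i<n. 0 \<le> negp z i - \<epsilon> * u i)))"
proof -
  have pos: "(\<lambda>i. posp z i + \<epsilon> * u i - negp z i) = (\<lambda>i. z i + \<epsilon> * u i)" for \<epsilon>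
    by (simp add: posp_def negp_def fun_eq_iff max_def)
  have neg: "norm1 n (\<lambda>i. negp z i + \<epsilon> * u i - posp z i) = norm1 n (\<lambda>i. z i + (- \<epsilon>) * u i)" for \<epsilon>
    unfolding norm1_def by (rule sum.cong) (auto simp: posp_def negp_def)
  have "reduces_dist n u z \<longleftrightarrow>
     (\<exists>\<epsilon>\<in>{1, -1::int}. (\<forall>i<n. 0 \<le> posp z i + \<epsilon> * u i) \<and>
        norm1 n (\<lambda>i. posp z i + \<epsilon> * u i - negp z i) < norm1 n z) \<or>
     (\<exists>\<epsilon>\<in>{1, -1::int}. (\<forall>i<n. 0 \<le> negp z i + \<epsilon> * u i) \<and>
        norm1 n (\<lambda>i. negp z i + \<epsilon> * u i - posp z i) < norm1 n z)"
    unfolding reduces_dist_def by blast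
  then show ?thesis
    by (simp only: pos neg) auto
qed

lemma reduces_dist_norm1_less:
  "reduces_dist n u z \<Longrightarrow> \<exists>\<epsilon>\<in>{1, -1::int}. norm1 n (\<lambda>i. z i + \<epsilon> * u i) < norm1 n z"
  unfolding reduces_dist_iff by blast

lemma norm1_uminus: "norm1 n (- z) = norm1 n z"
  by (simp add: norm1_def)

lemma reduces_dist_uminus: "reduces_dist n u (- z) \<longleftrightarrow> reduces_dist n u z"
proof -
  have "posp (- z) = negp z" "negp (- z) = posp z"
    by (simp_all add: posp_def negp_def fun_eq_iff)
  then show ?thesis
    unfolding reduces_dist_def by (auto simp: norm1_uminus)
qed

lemma norm1_3: "norm1 3 z = \<bar>z 0\<bar> + \<bar>z 1\<bar> + \<bar>z 2\<bar>"
  by (simp add: norm1_def numeral_3_eq_3 numeral_2_eq_2)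

lemma all_less_3: "(\<forall>i<(3::nat). P i) \<longleftrightarrow> P 0 \<and> P 1 \<and> P 2"
  by (auto simp: numeral_3_eq_3 numeral_2_eq_2 less_Suc_eq)

lemma vec3_apply: "vec3 x y t 0 = x" "vec3 x y t 1 = y" "vec3 x y t 2 = t"
  by (simp_all add: vec3_def)

lemma vec3_eq_iff: "vec3 x y t = vec3 x' y' t' \<longleftrightarrow> x = x' \<and> y = y' \<and> t = t'"
  by (metis vec3_apply)

lemma vec3_lincomb:
  "(\<lambda>i. \<alpha> * vec3 x1 x2 x3 i + \<beta> * vec3 y1 y2 y3 i)
     = vec3 (\<alpha> * x1 + \<beta> * y1) (\<alpha> * x2 + \<beta> * y2) (\<alpha> * x3 + \<beta> * y3)"
  by (simp add: vec3_def fun_eq_iff)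

lemma reduces_dist_move_b:
  fixes b1 b2 x y t :: int
  assumes "0 < b2" "b2 < b1" "b1 \<le> x" "t \<le> 0"
  shows "reduces_dist 3 (vec3 b1 (- b2) 0) (vec3 x y t)"
  unfolding reduces_dist_iff using assms
  by (intro bexI[of _ "-1"] conjI disjI1) (auto simp: norm1_3 all_less_3 posp_def vec3_def)

lemma reduces_dist_move_c:
  fixes c1 c2 c3 x y t :: int
  assumes "0 \<le> c1" "0 \<le> c2" "0 \<le> c3" "c1 < c2 + c3" "c2 \<le> y" "t \<le> - c3"
  shows "reduces_dist 3 (vec3 c1 c2 (- c3)) (vec3 x y t)"
  unfolding reduces_dist_iff using assms
  by (intro bexI[of _ "-1"] conjI disjI2) (auto simp: norm1_3 all_less_3 negp_def vec3_def)

lemma reduces_dist_vec3_lincomb: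
  fixes \<alpha> \<beta> b1 b2 c1 c2 c3 :: int
  assumes "0 < b2" "b2 < b1" "0 \<le> c1" "0 \<le> c2" "0 \<le> c3" "c1 < c2 + c3"
    and "\<alpha> \<noteq> 0 \<or> \<beta> \<noteq> 0"
  shows "reduces_dist 3 (vec3 b1 (- b2) 0) (\<lambda>i. \<alpha> * vec3 b1 (- b2) 0 i + \<beta> * vec3 c1 c2 (- c3) i)
       \<or> reduces_dist 3 (vec3 c1 c2 (- c3)) (\<lambda>i. \<alpha> * vec3 b1 (- b2) 0 i + \<beta> * vec3 c1 c2 (- c3) i)"
    (is "?P \<alpha> \<beta>")
proof -
  have cone: "?P \<alpha> \<beta>" if "1 \<le> \<alpha> \<and> 0 \<le> \<beta> \<or> \<alpha> \<le> 0 \<and> 1 \<le> \<beta>" for \<alpha> \<beta>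
    using that
  proof (elim disjE conjE)
    assume "1 \<le> \<alpha>" "0 \<le> \<beta>"
    have "b1 \<le> \<alpha> * b1"
      using \<open>1 \<le> \<alpha>\<close> assms(1,2) by (simp add: mult_le_cancel_right1)
    moreover have "0 \<le> \<beta> * c1" "0 \<le> \<beta> * c3"
      using \<open>0 \<le> \<beta>\<close> assms(3,5) by simp_all
    ultimately have "b1 \<le> \<alpha> * b1 + \<beta> * c1" "- \<beta> * c3 \<le> 0"
      by linarith+
    then show ?thesis
      using assms by (simp add: vec3_lincomb reduces_dist_move_b)
  next
    assume "\<alpha> \<le> 0" "1 \<le> \<beta>"
    have "c2 \<le> \<beta> * c2" "c3 \<le> \<beta> * c3"
      using \<open>1 \<le> \<beta>\<close> assms(4,5) by (simp_all add: mult_le_cancel_right1)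
    moreover have "0 \<le> \<alpha> * - b2"
      using \<open>\<alpha> \<le> 0\<close> assms(1) by (simp add: mult_nonpos_nonneg)
    ultimately have "c2 \<le> \<alpha> * - b2 + \<beta> * c2" "- \<beta> * c3 \<le> - c3"
      by linarith+
    then show ?thesis
      using assms by (simp add: vec3_lincomb reduces_dist_move_c)
  qed
  have "1 \<le> \<alpha> \<and> 0 \<le> \<beta> \<or> \<alpha> \<le> 0 \<and> 1 \<le> \<beta> \<or> 1 \<le> - \<alpha> \<and> 0 \<le> - \<beta> \<or> - \<alpha> \<le> 0 \<and> 1 \<le> - \<beta>"
    using assms(7) by linarith
  moreover have "(\<lambda>i. - \<alpha> * vec3 b1 (- b2) 0 i + - \<beta> * vec3 c1 c2 (- c3) i)
      = - (\<lambda>i. \<alpha> * vec3 b1 (- b2) 0 i + \<beta> * vec3 c1 c2 (- c3) i)"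
    by (simp add: fun_eq_iff)
  ultimately show ?thesis
    using cone[of \<alpha> \<beta>] cone[of "- \<alpha>" "- \<beta>"] by (auto simp: reduces_dist_uminus)
qed

lemma not_reduces_dist_move_b_circuit:
  fixes b1 b2 y t :: int
  assumes "0 < b2" "b2 < b1"
  shows "\<not> reduces_dist 3 (vec3 b1 (- b2) 0) (vec3 0 y t)"
  using assms by (auto dest!: reduces_dist_norm1_less simp: norm1_3 vec3_def)

lemma reduces_dist_move_c_circuit_imp:
  fixes c1 c2 c3 y t :: int
  assumes "0 \<le> c1" "0 \<le> c2" "0 \<le> c3" "c2 \<le> y" "c3 \<le> t"
    and "reduces_dist 3 (vec3 c1 c2 (- c3)) (vec3 0 y (- t))"
  shows "c1 < c2 + c3"
  using reduces_dist_norm1_less[OF assms(6)] assms(1-5) by (auto simp: norm1_3 vec3_def)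

lemma circuit_in_kerA:
  fixes a1 a2 a3 :: int
  shows "vec3 0 (a3 div gcd a2 a3) (- (a2 div gcd a2 a3)) \<in> kerA 1 3 (\<lambda>_. vec3 a1 a2 a3)"
proof -
  have "a2 * (a3 div gcd a2 a3) = a3 * (a2 div gcd a2 a3)"
    by (simp add: div_mult_swap mult.commute)
  then show ?thesis
    by (simp add: kerA_def vec3_def numeral_3_eq_3 numeral_2_eq_2)
qed

lemma distance_reducing_vec3_pair:
  fixes b1 b2 c1 c2 c3 :: int
  assumes mb: "markov_basis TYPE('k::field) m 3 A {vec3 b1 (- b2) 0, vec3 c1 c2 (- c3)}"
    and "0 < b2" "b2 < b1" "0 \<le> c1" "0 \<le> c2" "0 \<le> c3" "c1 < c2 + c3"
  shows "distance_reducing m 3 A {vec3 b1 (- b2) 0, vec3 c1 c2 (- c3)}"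
  unfolding distance_reducing_def reduces_dist_set_def
proof (intro ballI impI)
  fix u assume u: "u \<in> kerA m 3 A" "u \<noteq> (\<lambda>_. 0)"
  obtain \<alpha> \<beta> where "u = (\<lambda>i. \<alpha> * vec3 b1 (- b2) 0 i + \<beta> * vec3 c1 c2 (- c3) i)"
    using markov_basis_pair_lincomb[OF mb u(1)] .
  moreover from this have "\<alpha> \<noteq> 0 \<or> \<beta> \<noteq> 0"
    using u(2) by auto
  ultimately show "\<exists>w\<in>{vec3 b1 (- b2) 0, vec3 c1 c2 (- c3)}. reduces_dist 3 w u"
    using reduces_dist_vec3_lincomb[OF assms(2-7)] by blast
qed

lemma reduces_dist_circuit_imp:
  fixes b1 b2 c1 c2 c3 y t :: int
  assumes mb: "markov_basis TYPE('k::field) m 3 A {vec3 b1 (- b2) 0, vec3 c1 c2 (- c3)}"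
    and z: "vec3 0 y (- t) \<in> kerA m 3 A"
    and "0 < b2" "b2 < b1" "0 \<le> c1" "0 \<le> c2" "0 < c3" "0 < t"
    and "reduces_dist_set 3 {vec3 b1 (- b2) 0, vec3 c1 c2 (- c3)} {vec3 0 y (- t)}"
  shows "c1 < c2 + c3"
proof -
  obtain \<alpha> \<beta> where "vec3 0 y (- t) = (\<lambda>i. \<alpha> * vec3 b1 (- b2) 0 i + \<beta> * vec3 c1 c2 (- c3) i)"
    using markov_basis_pair_lincomb[OF mb z] .
  then have coords: "0 = \<alpha> * b1 + \<beta> * c1" "y = \<beta> * c2 - \<alpha> * b2" "t = \<beta> * c3"
    by (simp_all add: vec3_lincomb vec3_eq_iff)
  then have "1 \<le> \<beta>"
    using assms(7,8) by (simp add: zero_less_mult_iff)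
  then have "0 \<le> \<beta> * c1"
    using assms(5) by simp
  then have "\<alpha> * b1 \<le> 0"
    using coords(1) by linarith
  then have "\<alpha> \<le> 0"
    using assms(3,4) by (simp add: mult_le_0_iff)
  have "c2 \<le> \<beta> * c2" "c3 \<le> \<beta> * c3"
    using \<open>1 \<le> \<beta>\<close> assms(6,7) by (simp_all add: mult_le_cancel_right1)
  moreover have "\<alpha> * b2 \<le> 0"
    using \<open>\<alpha> \<le> 0\<close> assms(3) by (simp add: mult_nonpos_nonneg)
  ultimately have "c2 \<le> y" "c3 \<le> t"
    using coords by linarith+
  moreover have "vec3 0 y (- t) \<noteq> (\<lambda>_. 0)"
    using assms(8) by (auto simp: vec3_def fun_eq_iff)
  ultimately show ?thesis
    using assms(9) not_reduces_dist_move_b_circuit[OF assms(3,4)]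
      reduces_dist_move_c_circuit_imp[OF assms(5,6) less_imp_le[OF assms(7)]]
    unfolding reduces_dist_set_def by blast
qed

theorem theorem3p5:
  fixes a1 a2 a3 b1 b2 c1 c2 c3 :: int
  assumes "a1 > 0" "a2 > 0" "a3 > 0"
    and "a1 \<noteq> a2" "a1 \<noteq> a3" "a2 \<noteq> a3"
    and "complete_intersection TYPE('k::field) 1 3 (\<lambda>_. vec3 a1 a2 a3) 2"
    and "b1 > 0" "b2 > 0" "c3 > 0" "c1 \<ge> 0" "c2 \<ge> 0" "b1 > b2"
    and "minimal_markov_basis TYPE('k) 1 3 (\<lambda>_. vec3 a1 a2 a3)
           {vec3 b1 (- b2) 0, vec3 c1 c2 (- c3)}"
  shows "(distance_reducing 1 3 (\<lambda>_. vec3 a1 a2 a3) {vec3 b1 (- b2) 0, vec3 c1 c2 (- c3)}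
          \<longleftrightarrow> reduces_dist_set 3 {vec3 b1 (- b2) 0, vec3 c1 c2 (- c3)}
                {vec3 0 (a3 div gcd a2 a3) (- (a2 div gcd a2 a3))})
       \<and> (reduces_dist_set 3 {vec3 b1 (- b2) 0, vec3 c1 c2 (- c3)}
                {vec3 0 (a3 div gcd a2 a3) (- (a2 div gcd a2 a3))}
          \<longleftrightarrow> c1 < c2 + c3)"
proof -
  \<comment> \<open>The complete-intersection and distinctness hypotheses only guarantee that a minimal
     Markov basis of this shape exists.\<close>
  have mb: "markov_basis TYPE('k) 1 3 (\<lambda>_. vec3 a1 a2 a3) {vec3 b1 (- b2) 0, vec3 c1 c2 (- c3)}"
    using assms(14) unfolding minimal_markov_basis_def by blast
  have "0 < a2 div gcd a2 a3"
    using assms(2) by (simp add: pos_imp_zdiv_pos_iff)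
  then have "c1 < c2 + c3"
    if "reduces_dist_set 3 {vec3 b1 (- b2) 0, vec3 c1 c2 (- c3)}
          {vec3 0 (a3 div gcd a2 a3) (- (a2 div gcd a2 a3))}"
    using reduces_dist_circuit_imp[OF mb circuit_in_kerA] assms(9-13) that by auto
  moreover have "distance_reducing 1 3 (\<lambda>_. vec3 a1 a2 a3) {vec3 b1 (- b2) 0, vec3 c1 c2 (- c3)}"
    if "c1 < c2 + c3"
    using distance_reducing_vec3_pair[OF mb] assms(9-13) that by auto
  moreover have "reduces_dist_set 3 B {vec3 0 (a3 div gcd a2 a3) (- (a2 div gcd a2 a3))}"
    if "distance_reducing 1 3 (\<lambda>_. vec3 a1 a2 a3) B" for B
    using that circuit_in_kerA unfolding distance_reducing_def reduces_dist_set_def by blast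
  ultimately show ?thesis
    by blast
qed

end
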